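(* Let $p=2$ and let $\chi=\mathfrak{Z}_5+2\mathfrak{Z}_{15}$, a character $U_1\to\mathbb{Z}/4\mathbb{Z}$ of type $\langle5,15\rangle$ in reduced form (so $\chi(E_{11})=0$). Then $\chi$ is strictly equivalent to a character $\psi$ in reduced form of type $\langle 5,15\rangle$, i.e. $\psi=\mathfrak{Z}_5+\sum_{10\le j\le15,\,j\text{ odd}}b_j\cdot 2\,\mathfrak{Z}_j$ with $b_j\in\{0,1\}$, $b_{15}=1$, such that $\psi(E_{11})=2$; in particular $\psi\neq\chi$, so the uniqueness of reduced forms in a strict equivalence class fails when $l\ge p$.
   Context: Here $p=2$, $U_1=1+t\mathbb{F}_2[[t]]$, $U_j=1+t^j\mathbb{F}_2[[t]]$, with the $t$-adic topology. The Nottingham group $\mathcal{N}$ over $\mathbb{F}_2$ is the set of power series $u(t)=t(1+c_1t+\cdots)$, $c_i\in\mathbb{F}_2$, under composition. A character is a continuous homomorphism $\chi:U_1\to\mathbb{Z}/4\mathbb{Z}$; $\mathcal{N}$ acts by ${}_u\chi(f(t))=\chi(f(u(t)))$. Characters $\chi,\psi$ are strictly equivalent if $\psi={}_u\chi$ for some $u\in\mathcal{N}$ with $\chi(u(t)/t)=0$. A surjective character has type $\langle l,m\rangle$ where $l$ is the largest $b$ with $\chi(U_b)\not\subset 2\mathbb{Z}/4\mathbb{Z}$ and $m$ the largest $b$ with $\chi(U_b)\ne0$. Put $E_j=1+t^j$; the $E_j$ with $j$ odd form a topological $\mathbb{Z}_2$-basis of $U_1$, and for odd $j$, $\mathfrak{Z}_j$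 is the character with $\mathfrak{Z}_j(E_i)=\delta_{ij}$ for all odd $i$. *)

theory Defs
  imports "HOL-Computational_Algebra.Formal_Power_Series" "HOL-Library.Z2" "HOL-Library.Numeral_Type"
begin

definition U :: "nat \<Rightarrow> bit fps set" where
  "U j = {f. fps_nth f 0 = 1 \<and> (\<forall>i. 0 < i \<and> i < j \<longrightarrow> fps_nth f i = 0)}"

abbreviation U1 :: "bit fps set" where "U1 \<equiv> U 1"

definition E :: "nat \<Rightarrow> bit fps" where
  "E j = 1 + fps_X ^ j"

text \<open>Continuous homomorphism U_1 -> Z/4Z (Z/4Z discrete, so continuity means the
  kernel contains some U_b); extended by 0 outside U_1 so that it is a unique function.\<close>
definition is_character :: "(bit fps \<Rightarrow> 4) \<Rightarrow> bool" where
  "is_character \<chi> \<longleftrightarrow>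
     (\<forall>f\<in>U1. \<forall>g\<in>U1. \<chi> (f * g) = \<chi> f + \<chi> g) \<and>
     (\<exists>b\<ge>1. \<forall>f\<in>U b. \<chi> f = 0) \<and>
     (\<forall>f. f \<notin> U1 \<longrightarrow> \<chi> f = 0)"

definition Zfrak :: "nat \<Rightarrow> bit fps \<Rightarrow> 4" where
  "Zfrak j = (THE \<chi>. is_character \<chi> \<and>
               (\<forall>i. odd i \<longrightarrow> \<chi> (E i) = (if i = j then 1 else 0)))"

definition nottingham :: "bit fps set" where
  "nottingham = {u. fps_nth u 0 = 0 \<and> fps_nth u 1 = 1}"

definition act :: "bit fps \<Rightarrow> (bit fps \<Rightarrow> 4) \<Rightarrow> bit fps \<Rightarrow> 4" where
  "act u \<chi> f = (if f \<in> U1 then \<chi> (f oo u) else 0)"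

definition strictly_equivalent :: "(bit fps \<Rightarrow> 4) \<Rightarrow> (bit fps \<Rightarrow> 4) \<Rightarrow> bool" where
  "strictly_equivalent \<chi> \<psi> \<longleftrightarrow>
     (\<exists>u\<in>nottingham. \<chi> (fps_shift 1 u) = 0 \<and> \<psi> = act u \<chi>)"

end

theory Submission
  imports Defs
begin

text \<open>Every \<open>f \<in> U_1\<close> factors modulo \<open>U_b\<close> as a product of powers \<open>E_j^a_j\<close>, \<open>j < b\<close> odd,
  and for \<open>2j < b\<close> the exponent \<open>a_j\<close> is determined modulo 4: after cancelling common
  factors, a factor \<open>E_j^(w 2^k) = E_(j 2^k)^w\<close> (\<open>w\<close> odd) of lowest level \<open>j 2^k < b\<close> would
  give the quotient of two factorisations a nonzero coefficient in degree \<open>j 2^k\<close>.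
  Reading off \<open>a_j\<close> modulo 4 yields the characters \<open>Zfrak j\<close>, and since
  \<open>\<chi>(E_(j 2^k)) = 2^k \<chi>(E_j)\<close>, a character is determined by its values on the \<open>E_j\<close>, \<open>j\<close> odd.

  For \<open>\<chi> = Zfrak 5 + 2 Zfrak 15\<close>, which vanishes on \<open>U_16\<close>, take
  \<open>u = t + t^4 + t^5 + t^8 + t^15\<close>. Modulo \<open>t^16\<close> we have \<open>u/t \<equiv> E_3 E_4 E_14\<close>, so
  \<open>\<chi>(u/t) = 0\<close>, and factoring \<open>1 + u^i = E_i \<circ> u\<close> for odd \<open>i < 16\<close> shows that
  \<open>f \<mapsto> \<chi>(f \<circ> u)\<close> is \<open>Zfrak 5 + 2 (Zfrak 11 + Zfrak 15)\<close>, whose value at \<open>E_11\<close> is 2.\<close>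

unbundle fps_syntax

declare add_bit_eq_xor[simp del] mult_bit_eq_and[simp del]

lemma bit_add_self[simp]: "(a::bit) + a = 0"
  by (cases a) simp_all

lemma fps_bit_add_self[simp]: "(f::bit fps) + f = 0"
  by (rule fps_ext) (simp only: fps_add_nth bit_add_self fps_zero_nth)

lemma of_nat_bit_odd: "odd w \<Longrightarrow> (of_nat w :: bit) = 1"
  by (auto elim!: oddE)

lemma of_nat_mod4_eq_0:
  assumes "4 dvd n" shows "(of_nat n :: 4) = 0"
proof -
  obtain k where "n = 4 * k" using assms by (auto elim!: dvdE)
  then have "(of_nat n :: 4) = 4 * of_nat k" by simp
  also have "(4::4) = 0" by simp
  finally show ?thesis by simp
qed

lemma four_dvd_two_power: "2 \<le> k \<Longrightarrow> (4::nat) dvd 2 ^ k"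
  using le_imp_power_dvd[of 2 k 2] by simp

lemma odd_two_power_decomp:
  assumes "1 \<le> (n::nat)"
  obtains j k where "odd j" "n = j * 2 ^ k"
  using assms
proof (induction n arbitrary: thesis rule: less_induct)
  case (less n)
  show ?case
  proof (cases "odd n")
    case True
    then show ?thesis using less.prems(1)[of n 0] by simp
  next
    case False
    then obtain m where m: "n = 2 * m" by (auto elim: evenE)
    with less.prems have "1 \<le> m" "m < n" by auto
    then obtain j k where "odd j" "m = j * 2 ^ k" using less.IH by blast
    then show ?thesis using m less.prems(1)[of j "Suc k"] by simp
  qed
qed

lemma odd_two_power_decomp_unique:
  fixes j j' :: nat
  assumes "odd j" "odd j'" "j * 2 ^ k = j' * 2 ^ k'"
  shows "j = j' \<and> k = k'"
proof -
  have *: "j = j' \<and> k = k'" if "odd j" "odd j'" "j * 2 ^ k = j' * 2 ^ k'" "k \<le> k'"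
    for j j' k k' :: nat
  proof -
    obtain d where d: "k' = k + d" using \<open>k \<le> k'\<close> le_Suc_ex by blast
    then have "j = j' * 2 ^ d" using that(3) by (simp add: power_add)
    with \<open>odd j\<close> have "d = 0" by (cases d) auto
    then show ?thesis using \<open>j = j' * 2 ^ d\<close> d by simp
  qed
  show ?thesis using *[OF assms] *[OF assms(2,1) assms(3)[symmetric]] by linarith
qed

subsection \<open>The filtration \<open>U_n\<close>\<close>

lemma U_antimono: "m \<le> n \<Longrightarrow> U n \<subseteq> U m"
  unfolding U_def by auto

lemma U_nth_0: "f \<in> U n \<Longrightarrow> f $ 0 = 1"
  unfolding U_def by auto

lemma U_nth_eq_0: "f \<in> U n \<Longrightarrow> 0 < i \<Longrightarrow> i < n \<Longrightarrow> f $ i = 0"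
  unfolding U_def by auto

lemma U1_iff[simp]: "f \<in> U (Suc 0) \<longleftrightarrow> f $ 0 = 1"
  by (auto simp: U_def)

lemma U_subset_U1: "1 \<le> n \<Longrightarrow> f \<in> U n \<Longrightarrow> f \<in> U1"
  using U_antimono[of 1 n] by auto

lemma U_SucI: "f \<in> U n \<Longrightarrow> f $ n = 0 \<Longrightarrow> f \<in> U (Suc n)"
  unfolding U_def by (auto simp: less_Suc_eq)

lemma U_mult_nth:
  assumes "f \<in> U n" "g \<in> U n" "0 < i" "i \<le> n"
  shows "(f * g) $ i = f $ i + g $ i"
proof -
  have "(f * g) $ i = (\<Sum>j\<in>{0,i}. f $ j * g $ (i - j))"
    unfolding fps_mult_nth using assms by (intro sum.mono_neutral_right) (auto simp: U_nth_eq_0)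
  then show ?thesis using assms by (simp add: U_nth_0 add.commute)
qed

lemma U_mult: "f \<in> U n \<Longrightarrow> g \<in> U n \<Longrightarrow> f * g \<in> U n"
  using U_mult_nth[of f n g] unfolding U_def by auto

lemma U_one[simp]: "1 \<in> U n"
  unfolding U_def by simp

lemma U_prod: "(\<And>i. i \<in> S \<Longrightarrow> F i \<in> U n) \<Longrightarrow> prod F S \<in> U n"
  by (induction S rule: infinite_finite_induct) (auto intro: U_mult)

lemma U_power: "f \<in> U n \<Longrightarrow> f ^ k \<in> U n"
  by (induction k) (auto intro: U_mult)

lemma mult_inverse_in_U:
  assumes "f $ 0 = 1" "g $ 0 = 1" "\<And>i. i < n \<Longrightarrow> g $ i = f $ i"
  shows "g * inverse f \<in> U n"
proof -
  have eq: "g * inverse f = 1 + (g - f) * inverse f"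
    using assms(1) by (simp add: algebra_simps inverse_mult_eq_1')
  have "((g - f) * inverse f) $ i = 0" if "i < n \<or> i = 0" for i
    unfolding fps_mult_nth using that assms(2,3) by (intro sum.neutral) auto
  then have "(g * inverse f) $ i = (if i = 0 then 1 else 0)" if "i < n \<or> i = 0" for i
    using that by (subst eq) (simp only: fps_add_nth fps_one_nth add_0_right)
  then show ?thesis
    unfolding U_def using assms(1,2) by auto
qed

subsection \<open>The elements \<open>E_n = 1 + t^n\<close>\<close>

lemma E_nth: "E j $ i = (if i = 0 then 1 else 0) + (if i = j then 1 else 0)"
  by (simp add: E_def)

lemma E_nth_0[simp]: "j \<noteq> 0 \<Longrightarrow> E j $ 0 = 1"
  by (simp add: E_def)

lemma E_in_U: "1 \<le> j \<Longrightarrow> E j \<in> U j"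
  unfolding U_def E_def by auto

lemma E_mult_self: "E j * E j = E (2 * j)"
proof -
  have "(1 + a) * (1 + a) = 1 + (a + a) + a * a" for a :: "bit fps"
    by (simp only: distrib_left distrib_right mult_1_left mult_1_right add.assoc)
  then show ?thesis
    unfolding E_def by (simp add: power_add[symmetric] mult_2)
qed

lemma E_power_two_power: "E j ^ (2 ^ k) = E (j * 2 ^ k)"
proof (induction k)
  case (Suc k)
  have "E j ^ (2 ^ Suc k) = E j ^ 2 ^ k * E j ^ 2 ^ k"
    by (simp only: power_Suc mult.commute[of 2] power_mult power2_eq_square)
  then show ?case using Suc by (simp add: E_mult_self ac_simps)
qed simp

lemma E_power_in_U: "1 \<le> n \<Longrightarrow> E n ^ w \<in> U n"
  by (intro U_power E_in_U)

lemma E_power_nth_self: "1 \<le> n \<Longrightarrow> (E n ^ w) $ n = of_nat w"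
proof (induction w)
  case (Suc w)
  then show ?case
    using U_mult_nth[OF E_in_U E_power_in_U, of n n w] by (simp add: E_def)
qed simp

lemma U_split_E:
  assumes h: "h \<in> U n" and n: "1 \<le> n" and hn: "h $ n \<noteq> 0"
  obtains h' where "h' \<in> U (Suc n)" "h = h' * E n"
proof
  show "h * inverse (E n) \<in> U (Suc n)"
  proof (rule mult_inverse_in_U)
    fix i assume "i < Suc n"
    then show "h $ i = E n $ i"
      using h n hn by (cases "i = 0"; cases "i = n") (auto simp: E_nth U_nth_0 U_nth_eq_0)
  qed (use h n in \<open>simp_all add: U_nth_0\<close>)
  show "h = h * inverse (E n) * E n"
    using n by (simp add: mult.assoc inverse_mult_eq_1)
qed

subsection \<open>Products of the \<open>E_j\<close>, \<open>j\<close> odd\<close>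

definition odds_below :: "nat \<Rightarrow> nat set" where
  "odds_below b = {j. odd j \<and> j < b}"

lemma finite_odds_below[simp]: "finite (odds_below b)"
  unfolding odds_below_def by auto

lemma odds_below_ge_1: "j \<in> odds_below b \<Longrightarrow> 1 \<le> j"
  unfolding odds_below_def by (cases j) auto

definition E_prod :: "nat \<Rightarrow> (nat \<Rightarrow> nat) \<Rightarrow> bit fps" where
  "E_prod b a = (\<Prod>j\<in>odds_below b. E j ^ a j)"

lemma E_prod_add: "E_prod b (\<lambda>j. a j + c j) = E_prod b a * E_prod b c"
  unfolding E_prod_def by (simp add: power_add prod.distrib)

lemma E_prod_zero[simp]: "E_prod b (\<lambda>j. 0) = 1"
  unfolding E_prod_def by simp

lemma E_prod_single:
  assumes "j \<in> odds_below b" shows "E_prod b (\<lambda>i. if i = j then c else 0) = E j ^ c"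
proof -
  have "E_prod b (\<lambda>i. if i = j then c else 0) = (\<Prod>i\<in>odds_below b. if i = j then E j ^ c else 1)"
    unfolding E_prod_def by (intro prod.cong) auto
  then show ?thesis using assms by simp
qed

lemma E_prod_remove:
  assumes "j \<in> odds_below b" shows "E_prod b a = E j ^ a j * E_prod b (a(j := 0))"
proof -
  have "E_prod b a = E_prod b (\<lambda>i. (a(j := 0)) i + (if i = j then a j else 0))"
    by (rule arg_cong[where f = "E_prod b"]) auto
  also have "\<dots> = E_prod b (a(j := 0)) * E j ^ a j"
    by (simp only: E_prod_add E_prod_single[OF assms])
  finally show ?thesis by (simp only: mult.commute)
qed

lemma E_prod_in_U1: "E_prod b a \<in> U1"
  unfolding E_prod_def by (intro U_prod U_power E_in_U) (auto dest: odds_below_ge_1)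

lemma E_prod_factorisation:
  assumes f: "f \<in> U1" and "1 \<le> m" "m \<le> b"
  shows "\<exists>a. \<exists>h\<in>U m. f = E_prod b a * h"
  using assms(2,3)
proof (induction m rule: dec_induct)
  case base
  show ?case using f by (intro exI[of _ "\<lambda>j. 0"] bexI[of _ f]) simp_all
next
  case (step n)
  then obtain a h where h: "h \<in> U n" and fa: "f = E_prod b a * h" by auto
  show ?case
  proof (cases "h $ n = 0")
    case True
    then show ?thesis using fa U_SucI[OF h] by blast
  next
    case False
    then obtain h' where h': "h' \<in> U (Suc n)" "h = h' * E n"
      using U_split_E[OF h] step by auto
    obtain j k where jk: "odd j" "n = j * 2 ^ k"
      using odd_two_power_decomp step by blast
    have "j \<le> n" using jk by simp
    then have "j \<in> odds_below b" using step jk(1) unfolding odds_below_def by simp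
    then have "E_prod b (\<lambda>i. a i + (if i = j then 2 ^ k else 0)) = E_prod b a * E n"
      by (simp only: E_prod_add E_prod_single E_power_two_power jk)
    then have "f = E_prod b (\<lambda>i. a i + (if i = j then 2 ^ k else 0)) * h'"
      using fa h'(2) by (simp add: ac_simps)
    then show ?thesis using h'(1) by blast
  qed
qed

text \<open>The level of a factor \<open>E_j^(w 2^k)\<close>, \<open>w\<close> odd, is \<open>j 2^k\<close>: the factor equals
  \<open>E_(j 2^k)^w\<close>, whose first nonconstant term has degree \<open>j 2^k\<close>.\<close>

definition levels :: "nat \<Rightarrow> (nat \<Rightarrow> nat) \<Rightarrow> nat set" where
  "levels b a = {j * 2 ^ k | j k. j \<in> odds_below b \<and> (\<exists>w. odd w \<and> a j = w * 2 ^ k)}"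

lemma E_power_odd_two_power: "E j ^ (w * 2 ^ k) = E (j * 2 ^ k) ^ w"
  by (simp only: mult.commute[of w] power_mult E_power_two_power)

lemma E_prod_in_U_Suc:
  assumes m: "1 \<le> m" and lv: "\<forall>n\<in>levels b a. m < n"
  shows "E_prod b a \<in> U (Suc m)"
  unfolding E_prod_def
proof (rule U_prod)
  fix j assume j: "j \<in> odds_below b"
  show "E j ^ a j \<in> U (Suc m)"
  proof (cases "a j = 0")
    case False
    then obtain w k where wk: "odd w" "a j = w * 2 ^ k"
      using odd_two_power_decomp[of "a j"] by auto
    with j lv have "m < j * 2 ^ k" unfolding levels_def by blast
    moreover have "E (j * 2 ^ k) ^ w \<in> U (j * 2 ^ k)"
      using odds_below_ge_1[OF j] by (intro E_power_in_U) simp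
    ultimately show ?thesis
      using wk U_antimono[of "Suc m" "j * 2 ^ k"] by (auto simp: E_power_odd_two_power)
  qed simp
qed

lemma E_prod_lowest_level:
  assumes m: "1 \<le> m" and j0: "j0 \<in> odds_below b" "odd w0" "a j0 = w0 * 2 ^ k0" "m = j0 * 2 ^ k0"
    and lv: "\<forall>n\<in>levels b (a(j0 := 0)). m < n"
  shows "E_prod b a \<in> U m" "E_prod b a $ m = 1"
proof -
  have split: "E_prod b a = E m ^ w0 * E_prod b (a(j0 := 0))"
    using E_prod_remove[OF j0(1), of a] by (simp add: j0(3,4) E_power_odd_two_power)
  have rest: "E_prod b (a(j0 := 0)) \<in> U (Suc m)"
    using E_prod_in_U_Suc[OF m lv] .
  then have rest': "E_prod b (a(j0 := 0)) \<in> U m" "E_prod b (a(j0 := 0)) $ m = 0"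
    using U_antimono[of m "Suc m"] U_nth_eq_0[of _ "Suc m" m] m by auto
  show "E_prod b a \<in> U m"
    unfolding split using m rest' by (intro U_mult E_power_in_U)
  show "E_prod b a $ m = 1"
    unfolding split using U_mult_nth[OF E_power_in_U[OF m, of w0] rest'(1), of m] m rest'(2) j0(2)
    by (simp add: E_power_nth_self of_nat_bit_odd)
qed

lemma E_prod_lowest_level_contradiction:
  assumes eq: "E_prod b x * h = E_prod b y * h'" and h: "h \<in> U b" "h' \<in> U b"
    and disj: "\<And>j. x j = 0 \<or> y j = 0"
    and m: "m \<in> levels b x" "m < b" and least: "\<forall>n\<in>levels b x \<union> levels b y. m \<le> n"
  shows False
proof -
  obtain j0 k0 w0 where j0: "j0 \<in> odds_below b" "odd w0" "x j0 = w0 * 2 ^ k0" "m = j0 * 2 ^ k0"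
    using m(1) unfolding levels_def by blast
  have m1: "1 \<le> m" using odds_below_ge_1[OF j0(1)] j0(4) by simp
  have "y j0 = 0" using disj[of j0] j0(2,3) by (auto dest: odd_pos)
  have gt: "m < n" if n: "n \<in> levels b (x(j0 := 0)) \<union> levels b y" for n
  proof -
    obtain j k w where j: "j \<in> odds_below b" "odd w" "n = j * 2 ^ k"
      and "(x(j0 := 0)) j = w * 2 ^ k \<or> y j = w * 2 ^ k"
      using n unfolding levels_def by blast
    moreover have "w * 2 ^ k \<noteq> 0" using j(2) by (auto dest: odd_pos)
    ultimately have "j \<noteq> j0" "x j = w * 2 ^ k \<or> y j = w * 2 ^ k"
      using \<open>y j0 = 0\<close> by (auto split: if_splits)
    then have "n \<in> levels b x \<union> levels b y"
      using j unfolding levels_def by blast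
    moreover have "n \<noteq> m"
      using odd_two_power_decomp_unique[of j j0 k k0] j j0 \<open>j \<noteq> j0\<close>
      unfolding odds_below_def by auto
    moreover have "m \<le> n" using least \<open>n \<in> levels b x \<union> levels b y\<close> by blast
    ultimately show ?thesis by simp
  qed
  have "levels b (x(j0 := 0)) \<subseteq> levels b x"
    unfolding levels_def by (auto dest: odd_pos)
  then have "E_prod b x \<in> U m" "E_prod b x $ m = 1" "E_prod b y \<in> U (Suc m)"
    using E_prod_lowest_level[where a = x, OF m1 j0] E_prod_in_U_Suc[OF m1, of b y] gt by blast+
  moreover have "h \<in> U m" "h' \<in> U m" "h $ m = 0" "h' $ m = 0"
    using h m(2) m1 U_antimono[of m b] by (auto intro: U_nth_eq_0)
  ultimately have "(E_prod b x * h) $ m = 1" "(E_prod b y * h') $ m = 0"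
    using m1 U_antimono[of m "Suc m"] U_nth_eq_0[of "E_prod b y" "Suc m" m] by (auto simp: U_mult_nth)
  then show False using eq by simp
qed

lemma E_prod_levels_ge:
  assumes eq: "E_prod b x * h = E_prod b y * h'" and h: "h \<in> U b" "h' \<in> U b"
    and disj: "\<And>j. x j = 0 \<or> y j = 0"
    and n: "n \<in> levels b x"
  shows "b \<le> n"
proof (rule ccontr)
  assume "\<not> b \<le> n"
  define m where "m = (LEAST n. n \<in> levels b x \<union> levels b y)"
  have "m \<in> levels b x \<union> levels b y"
    unfolding m_def using n by (intro LeastI[where P = "\<lambda>n. n \<in> levels b x \<union> levels b y" and k = n]) simp
  moreover have "m \<le> n"
    unfolding m_def by (rule Least_le) (use n in simp)
  moreover have least: "\<forall>n\<in>levels b x \<union> levels b y. m \<le> n"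
    unfolding m_def by (auto intro: Least_le)
  ultimately have "m < b" and "m \<in> levels b x \<or> m \<in> levels b y"
    using \<open>\<not> b \<le> n\<close> by auto
  then show False
  proof (elim disjE)
    assume "m \<in> levels b x"
    then show False using E_prod_lowest_level_contradiction[OF eq h disj _ \<open>m < b\<close> least] by blast
  next
    assume "m \<in> levels b y"
    moreover have "y j = 0 \<or> x j = 0" for j using disj[of j] by auto
    moreover have "\<forall>n\<in>levels b y \<union> levels b x. m \<le> n" using least by blast
    ultimately show False
      using E_prod_lowest_level_contradiction[OF eq[symmetric] h(2,1) _ _ \<open>m < b\<close>] by blast
  qed
qed

lemma four_dvd_if_levels_ge:
  assumes j: "j \<in> odds_below b" "2 * j < b" and lv: "\<forall>n\<in>levels b a. b \<le> n"
  shows "4 dvd a j"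
proof (cases "a j = 0")
  case False
  then obtain w k where wk: "odd w" "a j = w * 2 ^ k"
    using odd_two_power_decomp[of "a j"] by auto
  then have "b \<le> j * 2 ^ k"
    using lv j(1) unfolding levels_def by blast
  have "2 \<le> k"
  proof (rule ccontr)
    assume "\<not> 2 \<le> k"
    then have "(2::nat) ^ k \<le> 2 ^ 1" by (intro power_increasing) auto
    then have "j * 2 ^ k \<le> 2 * j" by simp
    with j(2) \<open>b \<le> j * 2 ^ k\<close> show False by simp
  qed
  then show ?thesis
    using wk four_dvd_two_power[of k] by simp
qed simp

theorem E_prod_exponent_mod_4:
  assumes eq: "E_prod b a * h = E_prod b a' * h'" and h: "h \<in> U b" "h' \<in> U b"
    and j: "j \<in> odds_below b" "2 * j < b"
  shows "(of_nat (a j) :: 4) = of_nat (a' j)"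
proof -
  define c where "c i = min (a i) (a' i)" for i
  define x where "x i = a i - c i" for i
  define y where "y i = a' i - c i" for i
  have a: "a = (\<lambda>i. c i + x i)" "a' = (\<lambda>i. c i + y i)"
    unfolding c_def x_def y_def by auto
  have "E_prod b c \<noteq> 0"
    using U_nth_0[OF E_prod_in_U1[of b c]] by auto
  then have eq': "E_prod b x * h = E_prod b y * h'"
    using eq unfolding a E_prod_add by (simp add: mult.assoc)
  have disj: "x i = 0 \<or> y i = 0" for i
    unfolding x_def y_def c_def by auto
  have "y i = 0 \<or> x i = 0" for i
    using disj[of i] by auto
  then have "4 dvd x j" "4 dvd y j"
    using four_dvd_if_levels_ge[OF j] E_prod_levels_ge[OF eq' h disj]
      E_prod_levels_ge[OF eq'[symmetric] h(2,1)] by blast+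
  then show ?thesis
    unfolding a by (simp add: of_nat_mod4_eq_0)
qed

subsection \<open>Characters\<close>

lemma character_mult:
  "is_character \<chi> \<Longrightarrow> f \<in> U1 \<Longrightarrow> g \<in> U1 \<Longrightarrow> \<chi> (f * g) = \<chi> f + \<chi> g"
  unfolding is_character_def by blast

lemma character_outside_U1: "is_character \<chi> \<Longrightarrow> f \<notin> U1 \<Longrightarrow> \<chi> f = 0"
  unfolding is_character_def by blast

lemma character_E_times_two_power:
  assumes \<chi>: "is_character \<chi>" and j: "1 \<le> j"
  shows "\<chi> (E (j * 2 ^ k)) = 2 ^ k * \<chi> (E j)"
proof (induction k)
  case (Suc k)
  have "j * 2 ^ Suc k = 2 * (j * 2 ^ k)" by simp
  then have "\<chi> (E (j * 2 ^ Suc k)) = \<chi> (E (j * 2 ^ k) * E (j * 2 ^ k))"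
    by (simp only: E_mult_self)
  also have "\<dots> = \<chi> (E (j * 2 ^ k)) + \<chi> (E (j * 2 ^ k))"
    using j by (simp add: character_mult[OF \<chi>])
  finally show ?case using Suc by (simp add: algebra_simps)
qed simp

lemma character_vanishes_on_U:
  assumes \<chi>: "is_character \<chi>" and m: "1 \<le> m" and zero: "\<And>n. m \<le> n \<Longrightarrow> \<chi> (E n) = 0"
  shows "\<forall>f\<in>U m. \<chi> f = 0"
proof -
  obtain B where B: "\<forall>f\<in>U B. \<chi> f = 0"
    using \<chi> unfolding is_character_def by blast
  have "m \<le> max B m" by simp
  then show ?thesis
  proof (induction m rule: inc_induct)
    case base
    show ?case using B U_antimono[of B "max B m"] by auto
  next
    case (step n)
    have n: "1 \<le> n" using step m by simp
    show ?case
    proof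
      fix f assume f: "f \<in> U n"
      show "\<chi> f = 0"
      proof (cases "f $ n = 0")
        case True
        then show ?thesis using step U_SucI[OF f] by blast
      next
        case False
        then obtain f' where f': "f' \<in> U (Suc n)" "f = f' * E n"
          using U_split_E[OF f n] by blast
        then have "\<chi> f = \<chi> f' + \<chi> (E n)"
          using n U_subset_U1[of "Suc n" f'] by (simp add: character_mult[OF \<chi>])
        then show ?thesis using step f' zero[of n] by simp
      qed
    qed
  qed
qed

lemma is_character_add:
  assumes \<chi>: "is_character \<chi>" and \<psi>: "is_character \<psi>"
  shows "is_character (\<lambda>f. \<chi> f + \<psi> f)"
proof -
  obtain b1 b2 where "\<forall>f\<in>U b1. \<chi> f = 0" "\<forall>f\<in>U b2. \<psi> f = 0" "1 \<le> b1"
    using \<chi> \<psi> unfolding is_character_def by blast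
  then have "\<forall>f\<in>U (max b1 b2). \<chi> f + \<psi> f = 0" "1 \<le> max b1 b2"
    using subsetD[OF U_antimono[of b1 "max b1 b2"]] subsetD[OF U_antimono[of b2 "max b1 b2"]]
    by auto
  then show ?thesis
    using \<chi> \<psi> unfolding is_character_def by (auto simp: ac_simps)
qed

lemma is_character_scale: "is_character \<chi> \<Longrightarrow> is_character (\<lambda>f. c * \<chi> f)"
  unfolding is_character_def by (auto simp: algebra_simps)

lemma character_eqI:
  assumes \<chi>: "is_character \<chi>" and \<psi>: "is_character \<psi>"
    and eq: "\<And>i. odd i \<Longrightarrow> \<chi> (E i) = \<psi> (E i)"
  shows "\<chi> = \<psi>"
proof -
  define \<delta> where "\<delta> f = \<chi> f + - 1 * \<psi> f" for f
  have \<delta>: "is_character \<delta>"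
    unfolding \<delta>_def by (intro is_character_add is_character_scale \<chi> \<psi>)
  have "\<delta> (E n) = 0" if n: "1 \<le> n" for n
  proof -
    obtain j k where jk: "odd j" "n = j * 2 ^ k"
      using odd_two_power_decomp[OF n] by blast
    then have "1 \<le> j" by (cases j) auto
    then show ?thesis
      using character_E_times_two_power[OF \<delta>, of j k] jk eq[of j] by (simp add: \<delta>_def)
  qed
  then have "\<forall>f\<in>U1. \<delta> f = 0"
    by (intro character_vanishes_on_U[OF \<delta>]) auto
  then have "\<chi> f = \<psi> f" for f
    using character_outside_U1[OF \<chi>, of f] character_outside_U1[OF \<psi>, of f]
    by (cases "f \<in> U1") (auto simp: \<delta>_def)
  then show ?thesis by auto
qed

text \<open>The exponent of \<open>E_j\<close>, modulo 4, in some factorisation of \<open>f\<close> modulo \<open>U_4j\<close>;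
  by \<open>E_prod_exponent_mod_4\<close> the choice of factorisation does not matter.\<close>

definition exponent_mod_4 :: "nat \<Rightarrow> bit fps \<Rightarrow> 4" where
  "exponent_mod_4 j f =
     (if f \<in> U1 then of_nat ((SOME a. \<exists>h\<in>U (4 * j). f = E_prod (4 * j) a * h) j) else 0)"

lemma exponent_mod_4_E_prod:
  assumes j: "odd j" and h: "h \<in> U (4 * j)"
  shows "exponent_mod_4 j (E_prod (4 * j) a * h) = of_nat (a j)"
proof -
  have "1 \<le> 4 * j" using j by (cases j) auto
  then have "E_prod (4 * j) a * h \<in> U1"
    using h by (intro U_mult E_prod_in_U1 U_subset_U1)
  moreover obtain h' where h': "h' \<in> U (4 * j)"
    "E_prod (4 * j) a * h = E_prod (4 * j) (SOME a'. \<exists>h'\<in>U (4 * j). E_prod (4 * j) a * h = E_prod (4 * j) a' * h') * h'"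
    using someI_ex[of "\<lambda>a'. \<exists>h'\<in>U (4 * j). E_prod (4 * j) a * h = E_prod (4 * j) a' * h'"] h by blast
  moreover have "j \<in> odds_below (4 * j)" "2 * j < 4 * j"
    using j unfolding odds_below_def by (cases j; simp)+
  ultimately show ?thesis
    unfolding exponent_mod_4_def using E_prod_exponent_mod_4[OF h'(2) h h'(1)] by simp
qed

lemma exponent_mod_4_factorisation:
  assumes "odd j" "f \<in> U1"
  obtains a h where "h \<in> U (4 * j)" "f = E_prod (4 * j) a * h"
  using E_prod_factorisation[OF assms(2), of "4 * j" "4 * j"] assms(1) by (cases j) auto

lemma is_character_exponent_mod_4:
  assumes j: "odd j" shows "is_character (exponent_mod_4 j)"
  unfolding is_character_def
proof (intro conjI ballI allI impI)
  fix f g assume "f \<in> U1" "g \<in> U1"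
  then obtain a h a' h' where ah: "h \<in> U (4 * j)" "f = E_prod (4 * j) a * h"
    and ah': "h' \<in> U (4 * j)" "g = E_prod (4 * j) a' * h'"
    using exponent_mod_4_factorisation[OF j] by metis
  then have fg: "f * g = E_prod (4 * j) (\<lambda>i. a i + a' i) * (h * h')"
    by (simp add: E_prod_add ac_simps)
  show "exponent_mod_4 j (f * g) = exponent_mod_4 j f + exponent_mod_4 j g"
    unfolding fg using ah ah' U_mult[OF ah(1) ah'(1)] by (simp add: exponent_mod_4_E_prod[OF j])
next
  show "\<exists>b\<ge>1. \<forall>f\<in>U b. exponent_mod_4 j f = 0"
    using j exponent_mod_4_E_prod[OF j, of _ "\<lambda>i. 0"]
    by (intro exI[of _ "4 * j"]) (cases j; auto)
next
  fix f assume "f \<notin> U1" then show "exponent_mod_4 j f = 0"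
    unfolding exponent_mod_4_def by simp
qed

lemma exponent_mod_4_E:
  assumes j: "odd j" and i: "odd i"
  shows "exponent_mod_4 j (E i) = (if i = j then 1 else 0)"
proof (cases "i < 4 * j")
  case True
  then have "i \<in> odds_below (4 * j)" using i unfolding odds_below_def by simp
  then have "E i = E_prod (4 * j) (\<lambda>k. if k = i then 1 else 0) * 1"
    by (simp add: E_prod_single)
  then show ?thesis
    using exponent_mod_4_E_prod[OF j U_one, of "\<lambda>k. if k = i then 1 else 0"] by simp
next
  case False
  then have "E i \<in> U (4 * j)" "i \<noteq> j"
    using E_in_U[of i] U_antimono[of "4 * j" i] i j by (cases i; auto)+
  then show ?thesis
    using exponent_mod_4_E_prod[OF j, of "E i" "\<lambda>k. 0"] by simp
qed

lemma Zfrak_eq_exponent_mod_4: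
  assumes "odd j" shows "Zfrak j = exponent_mod_4 j"
  unfolding Zfrak_def
proof (rule the_equality)
  show "is_character (exponent_mod_4 j) \<and>
      (\<forall>i. odd i \<longrightarrow> exponent_mod_4 j (E i) = (if i = j then 1 else 0))"
    using assms by (simp add: is_character_exponent_mod_4 exponent_mod_4_E)
next
  fix \<chi> assume "is_character \<chi> \<and> (\<forall>i. odd i \<longrightarrow> \<chi> (E i) = (if i = j then 1 else 0))"
  then show "\<chi> = exponent_mod_4 j"
    using assms by (intro character_eqI) (auto simp: is_character_exponent_mod_4 exponent_mod_4_E)
qed

lemma is_character_Zfrak: "odd j \<Longrightarrow> is_character (Zfrak j)"
  by (simp add: Zfrak_eq_exponent_mod_4 is_character_exponent_mod_4)

lemma Zfrak_E: "odd j \<Longrightarrow> odd i \<Longrightarrow> Zfrak j (E i) = (if i = j then 1 else 0)"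
  by (simp add: Zfrak_eq_exponent_mod_4 exponent_mod_4_E)

subsection \<open>Computing modulo \<open>t^n\<close>\<close>

text \<open>Coefficient lists with truncated arithmetic, so that congruences modulo \<open>t^n\<close>
  between explicit polynomials can be decided by evaluation.\<close>

definition coeff_list :: "nat \<Rightarrow> bit fps \<Rightarrow> bit list" where
  "coeff_list n f = map (\<lambda>k. f $ k) [0..<n]"

definition list_mult :: "bit list \<Rightarrow> bit list \<Rightarrow> bit list" where
  "list_mult xs ys = map (\<lambda>k. \<Sum>j\<leftarrow>[0..<Suc k]. xs ! j * ys ! (k - j)) [0..<length xs]"

definition list_add :: "bit list \<Rightarrow> bit list \<Rightarrow> bit list" where
  "list_add xs ys = map (\<lambda>k. xs ! k + ys ! k) [0..<length xs]"

definition list_monom :: "nat \<Rightarrow> nat \<Rightarrow> bit list" where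
  "list_monom n i = map (\<lambda>k. if k = i then 1 else 0) [0..<n]"

fun list_power :: "bit list \<Rightarrow> nat \<Rightarrow> bit list" where
  "list_power xs 0 = list_monom (length xs) 0"
| "list_power xs (Suc m) = list_mult xs (list_power xs m)"

lemma length_coeff_list[simp]: "length (coeff_list n f) = n"
  by (simp add: coeff_list_def)

lemma nth_coeff_list[simp]: "k < n \<Longrightarrow> coeff_list n f ! k = f $ k"
  by (simp add: coeff_list_def)

lemma coeff_list_eq_iff: "coeff_list n f = coeff_list n g \<longleftrightarrow> (\<forall>k<n. f $ k = g $ k)"
  by (auto simp: coeff_list_def)

lemma coeff_list_mult: "coeff_list n (f * g) = list_mult (coeff_list n f) (coeff_list n g)"
proof (rule nth_equalityI)
  fix k assume "k < length (coeff_list n (f * g))"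
  then have k: "k < n" by simp
  have "list_mult (coeff_list n f) (coeff_list n g) ! k
      = (\<Sum>j\<leftarrow>[0..<Suc k]. coeff_list n f ! j * coeff_list n g ! (k - j))"
    using k by (simp add: list_mult_def)
  also have "\<dots> = (\<Sum>j\<leftarrow>[0..<Suc k]. f $ j * g $ (k - j))"
    using k by (intro arg_cong[where f = sum_list] map_cong) auto
  also have "\<dots> = (\<Sum>j=0..<Suc k. f $ j * g $ (k - j))"
    by (simp add: sum_list_distinct_conv_sum_set)
  also have "\<dots> = (f * g) $ k"
    by (simp add: fps_mult_nth atLeastLessThanSuc_atLeastAtMost)
  finally show "coeff_list n (f * g) ! k = list_mult (coeff_list n f) (coeff_list n g) ! k"
    using k by simp
qed (simp add: list_mult_def)

lemma coeff_list_add: "coeff_list n (f + g) = list_add (coeff_list n f) (coeff_list n g)"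
  by (rule nth_equalityI) (auto simp: list_add_def)

lemma coeff_list_X: "coeff_list n fps_X = list_monom n 1"
  by (rule nth_equalityI) (auto simp: list_monom_def fps_X_def)

lemma coeff_list_one: "coeff_list n 1 = list_monom n 0"
  by (rule nth_equalityI) (auto simp: list_monom_def)

lemma coeff_list_power: "coeff_list n (f ^ m) = list_power (coeff_list n f) m"
  by (induction m) (simp_all add: coeff_list_mult coeff_list_one)

lemmas coeff_list_simps =
  coeff_list_mult coeff_list_add coeff_list_X coeff_list_one coeff_list_power E_def

lemma character_eq_if_coeff_list_eq:
  assumes \<chi>: "is_character \<chi>" and zero: "\<forall>f\<in>U n. \<chi> f = 0" and n: "1 \<le> n"
    and f: "f \<in> U1" and g: "g \<in> U1" and eq: "coeff_list n f = coeff_list n g"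
  shows "\<chi> f = \<chi> g"
proof -
  have "f * inverse g \<in> U n"
    using eq f by (intro mult_inverse_in_U) (auto simp: coeff_list_eq_iff U_nth_0[OF g])
  moreover have "f = f * inverse g * g"
    using g by (simp add: mult.assoc inverse_mult_eq_1)
  ultimately have "\<chi> f = \<chi> (f * inverse g) + \<chi> g"
    using character_mult[OF \<chi> U_subset_U1[OF n] g] by metis
  then show ?thesis using zero \<open>f * inverse g \<in> U n\<close> by simp
qed

subsection \<open>The action of the Nottingham group\<close>

lemma compose_in_U:
  assumes u: "u $ 0 = 0" and f: "f \<in> U n"
  shows "f oo u \<in> U n"
  unfolding U_def
proof (intro CollectI conjI allI impI)
  show "(f oo u) $ 0 = 1" using f by (simp add: U_nth_0)
  fix i assume i: "0 < i \<and> i < n"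
  have "f $ k * (u ^ k $ i) = 0" if "k \<le> i" for k
    using that i f u by (cases "k = 0") (simp_all add: U_nth_eq_0)
  then show "(f oo u) $ i = 0"
    unfolding fps_compose_nth by (intro sum.neutral) auto
qed

lemma is_character_act:
  assumes u: "u \<in> nottingham" and \<chi>: "is_character \<chi>"
  shows "is_character (act u \<chi>)"
proof -
  have u0: "u $ 0 = 0" using u unfolding nottingham_def by simp
  obtain b where b: "b \<ge> 1" "\<forall>f\<in>U b. \<chi> f = 0"
    using \<chi> unfolding is_character_def by blast
  show ?thesis
    unfolding is_character_def
  proof (intro conjI ballI allI impI)
    fix f g assume f: "f \<in> U1" and g: "g \<in> U1"
    then show "act u \<chi> (f * g) = act u \<chi> f + act u \<chi> g"
      using compose_in_U[OF u0 f] compose_in_U[OF u0 g] U_mult[OF f g]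
      by (simp add: act_def fps_compose_mult_distrib[OF u0] character_mult[OF \<chi>])
  next
    show "\<exists>b\<ge>1. \<forall>f\<in>U b. act u \<chi> f = 0"
      using b compose_in_U[OF u0] U_subset_U1[OF b(1)] by (auto simp: act_def)
  next
    fix f assume "f \<notin> U1" then show "act u \<chi> f = 0" by (simp add: act_def)
  qed
qed

lemma E_compose: "u $ 0 = 0 \<Longrightarrow> E i oo u = 1 + u ^ i"
  unfolding E_def by (simp add: fps_compose_add_distrib fps_compose_power[symmetric])

lemma one_plus_power_in_U: "u $ 0 = 0 \<Longrightarrow> 1 \<le> i \<Longrightarrow> 1 + u ^ i \<in> U i"
  unfolding U_def using startsby_zero_power_prefix[of u i] by auto

lemma act_E: "u \<in> nottingham \<Longrightarrow> 1 \<le> i \<Longrightarrow> act u \<chi> (E i) = \<chi> (1 + u ^ i)"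
  unfolding nottingham_def by (simp add: act_def E_compose)

subsection \<open>The example\<close>

definition u_witness :: "bit fps" where
  "u_witness = fps_X + fps_X ^ 4 + fps_X ^ 5 + fps_X ^ 8 + fps_X ^ 15"

lemma u_witness_in_nottingham: "u_witness \<in> nottingham"
  by (simp add: nottingham_def u_witness_def)

lemma coeff_list_u_witness: "coeff_list 16 u_witness = [0,1,0,0,1,1,0,0,1,0,0,0,0,0,0,1]"
  unfolding u_witness_def by (simp only: coeff_list_simps) code_simp

text \<open>Factorisations of \<open>1 + u^i\<close>, \<open>i\<close> odd, and of \<open>u/t\<close> into the \<open>E_n\<close> modulo \<open>t^16\<close>,
  found by clearing the lowest nonzero term one at a time.\<close>

lemma u_witness_power_mod_t16:
  "coeff_list 16 (1 + u_witness ^ 1) = coeff_list 16 (E 1 * E 4 * E 8 * E 9 * E 10 * E 11 * E 15)"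
  "coeff_list 16 (1 + u_witness ^ 3) = coeff_list 16 (E 3 * E 6 * E 7 * E 11 * E 12)"
  "coeff_list 16 (1 + u_witness ^ 5) = coeff_list 16 (E 5 * E 8 * E 9 * E 12 * E 13 * E 14)"
  "coeff_list 16 (1 + u_witness ^ 7) = coeff_list 16 (E 7 * E 10 * E 11 * E 13 * E 14 * E 15)"
  "coeff_list 16 (1 + u_witness ^ 9) = coeff_list 16 (E 9 * E 12 * E 13)"
  "coeff_list 16 (1 + u_witness ^ 11) = coeff_list 16 (E 11 * E 14 * E 15)"
  "coeff_list 16 (1 + u_witness ^ 13) = coeff_list 16 (E 13)"
  "coeff_list 16 (1 + u_witness ^ 15) = coeff_list 16 (E 15)"
  by (simp only: coeff_list_simps coeff_list_u_witness; code_simp)+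

lemma u_witness_shift_mod_t16:
  "coeff_list 16 (fps_shift 1 u_witness) = coeff_list 16 (E 3 * E 4 * E 14)"
proof -
  have shift: "fps_shift 1 u_witness = 1 + fps_X ^ 3 + fps_X ^ 4 + fps_X ^ 7 + fps_X ^ 14"
    by (rule fps_ext) (simp add: u_witness_def)
  show ?thesis
    unfolding shift by (simp only: coeff_list_simps) code_simp
qed

lemma act_u_witness_E_eq:
  assumes \<chi>: "is_character \<chi>" and zero: "\<forall>f\<in>U 16. \<chi> f = 0"
    and i: "1 \<le> i" and g: "g \<in> U1" and eq: "coeff_list 16 (1 + u_witness ^ i) = coeff_list 16 g"
  shows "act u_witness \<chi> (E i) = \<chi> g"
proof -
  have "1 + u_witness ^ i \<in> U1"
    using one_plus_power_in_U[of u_witness i] i by (intro U_subset_U1[OF i]) (simp_all add: u_witness_def)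
  then show ?thesis
    using act_E[OF u_witness_in_nottingham i] character_eq_if_coeff_list_eq[OF \<chi> zero _ _ g eq]
    by simp
qed

lemma act_u_witness_E:
  assumes "is_character \<chi>" "\<forall>f\<in>U 16. \<chi> f = 0"
  shows "act u_witness \<chi> (E 1) = \<chi> (E 1 * E 4 * E 8 * E 9 * E 10 * E 11 * E 15)"
    and "act u_witness \<chi> (E 3) = \<chi> (E 3 * E 6 * E 7 * E 11 * E 12)"
    and "act u_witness \<chi> (E 5) = \<chi> (E 5 * E 8 * E 9 * E 12 * E 13 * E 14)"
    and "act u_witness \<chi> (E 7) = \<chi> (E 7 * E 10 * E 11 * E 13 * E 14 * E 15)"
    and "act u_witness \<chi> (E 9) = \<chi> (E 9 * E 12 * E 13)"
    and "act u_witness \<chi> (E 11) = \<chi> (E 11 * E 14 * E 15)"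
    and "act u_witness \<chi> (E 13) = \<chi> (E 13)"
    and "act u_witness \<chi> (E 15) = \<chi> (E 15)"
  using act_u_witness_E_eq[OF assms _ _ u_witness_power_mod_t16(1)]
    act_u_witness_E_eq[OF assms _ _ u_witness_power_mod_t16(2)]
    act_u_witness_E_eq[OF assms _ _ u_witness_power_mod_t16(3)]
    act_u_witness_E_eq[OF assms _ _ u_witness_power_mod_t16(4)]
    act_u_witness_E_eq[OF assms _ _ u_witness_power_mod_t16(5)]
    act_u_witness_E_eq[OF assms _ _ u_witness_power_mod_t16(6)]
    act_u_witness_E_eq[OF assms _ _ u_witness_power_mod_t16(7)]
    act_u_witness_E_eq[OF assms _ _ u_witness_power_mod_t16(8)]
  by simp_all

definition chi_5_15 :: "bit fps \<Rightarrow> 4" where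
  "chi_5_15 f = Zfrak 5 f + 2 * Zfrak 15 f"

definition psi_5_11_15 :: "bit fps \<Rightarrow> 4" where
  "psi_5_11_15 f = Zfrak 5 f + 2 * (Zfrak 11 f + Zfrak 15 f)"

lemma is_character_chi_5_15: "is_character chi_5_15"
  unfolding chi_5_15_def[abs_def]
  by (intro is_character_add is_character_scale is_character_Zfrak) simp_all

lemma is_character_psi_5_11_15: "is_character psi_5_11_15"
  unfolding psi_5_11_15_def[abs_def]
  by (intro is_character_add is_character_scale is_character_Zfrak) simp_all

lemma psi_5_11_15_E:
  "odd i \<Longrightarrow> psi_5_11_15 (E i) = (if i = 5 then 1 else if i = 11 \<or> i = 15 then 2 else 0)"
  by (simp add: psi_5_11_15_def Zfrak_E)

lemma chi_5_15_E:
  assumes n: "1 \<le> n"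
  shows "chi_5_15 (E n) = (if n = 5 then 1 else if n = 10 \<or> n = 15 then 2 else 0)"
proof -
  obtain j k where jk: "odd j" "n = j * 2 ^ k"
    using odd_two_power_decomp[OF n] by blast
  then have "1 \<le> j" by (cases j) auto
  then have val: "chi_5_15 (E n) = 2 ^ k * (if j = 5 then 1 else if j = 15 then 2 else 0)"
    using jk character_E_times_two_power[OF is_character_chi_5_15, of j k]
    by (simp add: chi_5_15_def Zfrak_E)
  have decomp_iff: "n = j' * 2 ^ k' \<longleftrightarrow> j = j' \<and> k = k'" if "odd j'" for j' k'
    using odd_two_power_decomp_unique[OF jk(1) that, of k k'] jk(2) by auto
  have two_power: "(2::4) ^ k' = 0" if "2 \<le> k'" for k'
    using of_nat_mod4_eq_0[OF four_dvd_two_power[OF that]] by simp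
  consider "j = 5" "k = 0" | "j = 5" "k = 1" | "j = 5" "2 \<le> k" | "j = 15" "k = 0"
    | "j = 15" "1 \<le> k" | "j \<noteq> 5" "j \<noteq> 15"
    by linarith
  then show ?thesis
    using val decomp_iff[of 5 0] decomp_iff[of 5 1] decomp_iff[of 15 0] two_power[of k]
      two_power[of "Suc k"]
    by cases (simp_all add: mult.commute)
qed

lemma chi_5_15_vanishes_on_U16: "\<forall>f\<in>U 16. chi_5_15 f = 0"
  by (rule character_vanishes_on_U[OF is_character_chi_5_15]) (simp_all add: chi_5_15_E)

lemma chi_5_15_shift_u_witness: "chi_5_15 (fps_shift 1 u_witness) = 0"
proof -
  have "fps_shift 1 u_witness \<in> U1"
    by (simp add: u_witness_def)
  then have "chi_5_15 (fps_shift 1 u_witness) = chi_5_15 (E 3 * E 4 * E 14)"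
    by (intro character_eq_if_coeff_list_eq[OF is_character_chi_5_15 chi_5_15_vanishes_on_U16]
        u_witness_shift_mod_t16) simp_all
  then show ?thesis
    by (simp add: character_mult[OF is_character_chi_5_15] chi_5_15_E)
qed

lemma act_u_witness_chi_5_15: "act u_witness chi_5_15 = psi_5_11_15"
proof (rule character_eqI)
  show "is_character (act u_witness chi_5_15)"
    by (rule is_character_act[OF u_witness_in_nottingham is_character_chi_5_15])
  show "is_character psi_5_11_15"
    by (rule is_character_psi_5_11_15)
  fix i :: nat assume i: "odd i"
  show "act u_witness chi_5_15 (E i) = psi_5_11_15 (E i)"
  proof (cases "16 \<le> i")
    case True
    then have "1 + u_witness ^ i \<in> U 16"
      using one_plus_power_in_U[of u_witness i] U_antimono[of 16 i] by (auto simp: u_witness_def)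
    then show ?thesis
      using True act_E[OF u_witness_in_nottingham, of i chi_5_15] chi_5_15_vanishes_on_U16 i
      by (simp add: psi_5_11_15_E)
  next
    case False
    with i have "i = 1 \<or> i = 3 \<or> i = 5 \<or> i = 7 \<or> i = 9 \<or> i = 11 \<or> i = 13 \<or> i = 15"
      by presburger
    then show ?thesis
      using act_u_witness_E[OF is_character_chi_5_15 chi_5_15_vanishes_on_U16]
      by (elim disjE) (simp_all add: character_mult[OF is_character_chi_5_15] chi_5_15_E psi_5_11_15_E)
  qed
qed

theorem mainTheorem9:
  fixes \<chi> :: "bit fps \<Rightarrow> 4"
  assumes "\<chi> = (\<lambda>f. Zfrak 5 f + 2 * Zfrak 15 f)"
  shows "\<exists>\<psi> b11 b13.
           strictly_equivalent \<chi> \<psi> \<and>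
           b11 \<in> {0, 1::4} \<and> b13 \<in> {0, 1::4} \<and>
           \<psi> = (\<lambda>f. Zfrak 5 f + 2 * (b11 * Zfrak 11 f + b13 * Zfrak 13 f + Zfrak 15 f)) \<and>
           \<psi> (E 11) = 2 \<and> \<psi> \<noteq> \<chi>"
proof -
  have \<chi>: "\<chi> = chi_5_15"
    using assms by (simp add: chi_5_15_def[abs_def])
  have "strictly_equivalent \<chi> psi_5_11_15"
    unfolding strictly_equivalent_def \<chi>
    using chi_5_15_shift_u_witness act_u_witness_chi_5_15
    by (intro bexI[OF _ u_witness_in_nottingham]) simp
  moreover have "psi_5_11_15 = (\<lambda>f. Zfrak 5 f + 2 * (1 * Zfrak 11 f + 0 * Zfrak 13 f + Zfrak 15 f))"
    by (simp add: psi_5_11_15_def[abs_def])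
  moreover have "psi_5_11_15 (E 11) = 2" "\<chi> (E 11) = 0"
    by (simp_all add: \<chi> psi_5_11_15_E chi_5_15_E)
  moreover have "psi_5_11_15 \<noteq> \<chi>"
    using calculation(3,4) by force
  ultimately show ?thesis
    by blast
qed

end
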